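(* Let $\mathbf x_1,\dots,\mathbf x_n\in\mathbb R^d$ be distinct points, let $f\colon(0,\infty)\to\mathbb R$ be differentiable, and let $J\colon\mathbb R^n\to\mathbb R$ be a symmetric function that is differentiable at $\lambda(L^{\mathbf x})$. Let $U\in O(n)$ be any orthogonal matrix, with columns $u_1,\dots,u_n$, satisfying $L^{\mathbf x}=U\,\mathrm{diag}(\lambda(L^{\mathbf x}))\,U^t$, and let $V=U\,\mathrm{diag}(\nabla J(\lambda))\,U^t$ with $\lambda=\lambda(L^{\mathbf x})$. Then the gradient of $\mathbf x\mapsto J(\lambda(L^{\mathbf x}))$ with respect to $\mathbf x_i$ is $$\nabla_{\mathbf x_i}\big(J\circ\lambda\circ L^{\mathbf x}\big)=2\sum_{k\ne i}\big(V_{kk}-2V_{ik}+V_{ii}\big)\, f'\big(|\mathbf x_i-\mathbf x_k|^2\big)\,(\mathbf x_i-\mathbf x_k).$$ Equivalently, $$\nabla_{\mathbf x_i}\big(J\circ\lambda\circ L^{\mathbf x}\big)=2\sum_{\text{edges }k=\{i,j\}} g_k\, f'\big(|\mathbf x_i-\mathbf x_j|^2\big)\,(\mathbf x_i-\mathbf x_j),$$ where $g\in\mathbb R^{\binom n2}$ is given by $g=\sum_{j=1}^n (Bu_j)^2\,(\nabla J(\lambda))_j$, with the square taken entrywise.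
   Context: $W^{\mathbf x}$ is the $n\times n$ symmetric matrix with $W^{\mathbf x}_{ij}=f(|\mathbf x_i-\mathbf x_j|^2)$ for $i\ne j$ and $W^{\mathbf x}_{ii}=0$; $D^{\mathbf x}$ is diagonal with $D^{\mathbf x}_{ii}=\sum_jW^{\mathbf x}_{ij}$; and $L^{\mathbf x}=D^{\mathbf x}-W^{\mathbf x}$. For a real symmetric matrix $A$, $\lambda(A)\in\mathbb R^n$ denotes its eigenvalues in non-decreasing order. $J$ is symmetric if $J(x)$ is invariant under permutations of the components of $x$. $B\in\mathbb R^{\binom n2\times n}$ is the arc–vertex incidence matrix of the complete graph on $[n]$ with each edge $k=\{i,j\}$, $i>j$, oriented so that $B_{k,i}=1$, $B_{k,j}=-1$, and $B_{k,l}=0$ otherwise; thus $L^{\mathbf x}=B^t\,\mathrm{diag}(w^{\mathbf x})\,B$ with $w^{\mathbf x}_k=f(|\mathbf x_i-\mathbf x_j|^2)$ for $k=\{i,j\}$. *)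

theory Defs
  imports "HOL-Analysis.Analysis" "HOL-Computational_Algebra.Polynomial"
begin

definition weight_mat :: "(real \<Rightarrow> real) \<Rightarrow> ('n::finite \<Rightarrow> real^'d) \<Rightarrow> real^'n^'n" where
  "weight_mat f x = (\<chi> i j. if i = j then 0 else f ((norm (x i - x j))\<^sup>2))"

definition degree_mat :: "(real \<Rightarrow> real) \<Rightarrow> ('n::finite \<Rightarrow> real^'d) \<Rightarrow> real^'n^'n" where
  "degree_mat f x = (\<chi> i j. if i = j then (\<Sum>k\<in>UNIV. weight_mat f x $ i $ k) else 0)"

definition laplacian :: "(real \<Rightarrow> real) \<Rightarrow> ('n::finite \<Rightarrow> real^'d) \<Rightarrow> real^'n^'n" where
  "laplacian f x = degree_mat f x - weight_mat f x"

definition diag_mat :: "real^'n \<Rightarrow> real^'n^'n" where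
  "diag_mat l = (\<chi> i j. if i = j then l $ i else 0)"

definition char_poly_mat :: "real^'n::finite^'n \<Rightarrow> real poly" where
  "char_poly_mat A = det (\<chi> i j. (if i = j then [:0, 1:] else 0) - [:A $ i $ j:])"

definition sorted_eigenvalues :: "real^('n::{finite,linorder})^('n::{finite,linorder}) \<Rightarrow> real^('n::{finite,linorder})" where
  "sorted_eigenvalues A = (THE l. (\<forall>i j. i \<le> j \<longrightarrow> l $ i \<le> l $ j) \<and>
       char_poly_mat A = (\<Prod>i\<in>UNIV. [:- (l $ i), 1:]))"

definition symmetric_fun :: "(real^'n \<Rightarrow> real) \<Rightarrow> bool" where
  "symmetric_fun J \<longleftrightarrow> (\<forall>p v. p permutes (UNIV::'n set) \<longrightarrow> J (\<chi> i. v $ p i) = J v)"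

text \<open>Arc-vertex incidence matrix of the complete graph: edges are 2-element
  subsets e of 'n, oriented from Min e to Max e (B e (Max e) = 1, B e (Min e) = -1).\<close>
definition incidence :: "'n::{finite,linorder} set \<Rightarrow> 'n \<Rightarrow> real" where
  "incidence e l = (if l = Max e then 1 else if l = Min e then -1 else 0)"

end

theory Submission
  imports Defs
begin

text \<open>The Laplacian is symmetric, and moving the single point x_i changes only the weights of the
  edges at i, each differentiably since the points are distinct. By Lewis' theorem the spectral
  function M \<mapsto> J(\<lambda>(M)) has, on symmetric matrices, the gradient
  V = U diag(\<nabla>J(\<lambda>)) U^t, so by the chain rule the derivative in direction h is the
  Frobenius pairing of V with the derivative of the Laplacian, which evaluates to the stated sum;
  the second form merely rewrites V_kk - 2 V_ik + V_ii as the squared incidence coefficient.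

  The sorted eigenvalue map is not differentiable, but it is
  Lipschitz at a symmetric A (a counting argument over orthogonal eigenbases), and the pairing
  \<nabla>J(\<lambda>) \<bullet> \<lambda>(M) agrees with V \<bullet> M up to second order because symmetry of J makes
  \<nabla>J(\<lambda>) constant on every cluster of equal eigenvalues of A.\<close>

lemma matrix_add_rdistrib: "((B + C) :: 'a::semiring_1^'n^'m) ** (A :: 'a^'k^'n) = B ** A + C ** A"
  by (simp add: matrix_matrix_mult_def vec_eq_iff sum.distrib algebra_simps)

lemma matrix_diff_ldistrib: "(A :: 'a::ring_1^'n^'m) ** (B - C) = A ** B - A ** (C :: 'a^'k^'n)"
  by (simp add: matrix_matrix_mult_def vec_eq_iff sum_subtractf algebra_simps)

lemma matrix_diff_rdistrib: "((B - C) :: 'a::ring_1^'n^'m) ** (A :: 'a^'k^'n) = B ** A - C ** A"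
  by (simp add: matrix_matrix_mult_def vec_eq_iff sum_subtractf algebra_simps)

lemma mat_mult_commute: "mat (c :: 'a::comm_semiring_1) ** A = A ** mat c"
  by (simp add: mat_def matrix_matrix_mult_def vec_eq_iff if_distrib if_distribR mult.commute
      cong: if_cong)

lemma diag_mat_mult_nth: "(diag_mat l ** X) $ a $ b = l $ a * X $ a $ b"
  by (simp add: diag_mat_def matrix_matrix_mult_def if_distrib[of "\<lambda>x. x * _"] cong: if_cong)

lemma mult_diag_mat_nth: "(X ** diag_mat l) $ a $ b = X $ a $ b * l $ b"
  by (simp add: diag_mat_def matrix_matrix_mult_def if_distrib[of "\<lambda>x. _ * x"] cong: if_cong)

lemma orthogonal_congruence_diag_nth:
  "(U ** diag_mat g ** transpose U) $ p $ q = (\<Sum>j\<in>UNIV. U $ p $ j * g $ j * U $ q $ j)"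
  by (simp add: matrix_matrix_mult_def diag_mat_def transpose_def if_distrib[of "\<lambda>x. _ * x"]
      cong: if_cong)

lemma symmetric_matrix_inner_commute:
  fixes M :: "real^'n^'n"
  assumes "transpose M = M"
  shows "(M *v x) \<bullet> y = x \<bullet> (M *v y)"
  by (metis assms dot_lmul_matrix vector_transpose_matrix)

lemma norm_matrix_power2: "(norm (X :: real^'n^'m))\<^sup>2 = (\<Sum>i\<in>UNIV. \<Sum>j\<in>UNIV. (X $ i $ j)\<^sup>2)"
  unfolding power2_norm_eq_inner by (simp add: inner_vec_def power2_eq_square)

lemma inner_matrix: "(X :: real^'n^'m) \<bullet> Y = (\<Sum>i\<in>UNIV. \<Sum>j\<in>UNIV. X $ i $ j * Y $ i $ j)"
  by (simp add: inner_vec_def)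

lemma norm_orthogonal_matrix_mult_vec:
  fixes Q :: "real^'n^'n"
  assumes "orthogonal_matrix Q"
  shows "norm (Q *v x) = norm x"
  using assms orthogonal_transformation_matrix[of "(*v) Q"]
  by (simp add: orthogonal_transformation_norm)

lemma norm_matrix_mult_orthogonal:
  fixes X :: "real^'n^'m" and W :: "real^'n^'n"
  assumes "orthogonal_matrix W"
  shows "norm (X ** W) = norm X"
proof -
  have "(X ** W) $ i = transpose W *v (X $ i)" for i
    by (simp add: vec_eq_iff matrix_matrix_mult_def matrix_vector_mult_def transpose_def mult.commute)
  hence "norm ((X ** W) $ i) = norm (X $ i)" for i
    using assms norm_orthogonal_matrix_mult_vec[of "transpose W"] by simp
  thus ?thesis by (simp add: norm_vec_def)
qed

lemma norm_transpose_matrix: "norm (transpose (X :: real^'n^'m)) = norm X"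
proof -
  have "(norm (transpose X))\<^sup>2 = (norm X)\<^sup>2"
    unfolding norm_matrix_power2 by (simp add: transpose_def) (rule sum.swap)
  thus ?thesis by (simp add: power2_eq_iff_nonneg)
qed

lemma norm_orthogonal_congruence:
  fixes H U W :: "real^'n^'n"
  assumes "orthogonal_matrix U" "orthogonal_matrix W"
  shows "norm (transpose U ** H ** W) = norm H"
proof -
  have "norm (transpose U ** H ** W) = norm (transpose (transpose H ** U))"
    using assms(2) by (simp add: norm_matrix_mult_orthogonal matrix_transpose_mul)
  also have "\<dots> = norm H"
    using assms(1) by (simp add: norm_transpose_matrix norm_matrix_mult_orthogonal)
  finally show ?thesis .
qed

lemma inner_orthogonal_congruence:
  fixes X Y U W :: "real^'n^'n"
  assumes "orthogonal_matrix U" "orthogonal_matrix W"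
  shows "(transpose U ** X ** W) \<bullet> (transpose U ** Y ** W) = X \<bullet> Y"
proof -
  let ?T = "\<lambda>X. transpose U ** X ** W"
  have polar: "a \<bullet> b = ((norm (a + b))\<^sup>2 - (norm (a - b))\<^sup>2) / 4" for a b :: "real^'n^'n"
    by (simp add: power2_norm_eq_inner inner_add_left inner_add_right inner_diff_left
        inner_diff_right inner_commute)
  have "?T (X + Y) = ?T X + ?T Y" "?T (X - Y) = ?T X - ?T Y"
    by (simp_all add: matrix_add_ldistrib matrix_add_rdistrib matrix_diff_ldistrib matrix_diff_rdistrib)
  thus ?thesis using norm_orthogonal_congruence[OF assms] polar by metis
qed

lemma orthogonal_matrix_column_sum_power2:
  assumes "orthogonal_matrix (P :: real^'n^'n)"
  shows "(\<Sum>a\<in>UNIV. (P $ a $ b)\<^sup>2) = 1"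
proof -
  have "column b P \<bullet> column b P = 1"
    using assms unfolding orthogonal_matrix_orthonormal_columns by (simp add: norm_eq_1)
  thus ?thesis by (simp add: inner_vec_def column_def power2_eq_square)
qed

lemma orthogonal_matrix_row_sum_power2:
  assumes "orthogonal_matrix (P :: real^'n^'n)"
  shows "(\<Sum>b\<in>UNIV. (P $ a $ b)\<^sup>2) = 1"
  using orthogonal_matrix_column_sum_power2[of "transpose P" a] assms
  by (simp add: transpose_def orthogonal_matrix_transpose[symmetric, of P])

section \<open>Spectral theorem for real symmetric matrices\<close>

lemma nonneg_le_quadratic_imp_zero:
  fixes a k :: real
  assumes "\<And>t. t > 0 \<Longrightarrow> 2 * t * a \<le> t\<^sup>2 * k" and "a \<ge> 0"
  shows "a = 0"
proof (rule ccontr)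
  assume "a \<noteq> 0"
  with assms(2) have a: "a > 0" by simp
  define t where "t = a / (\<bar>k\<bar> + 1)"
  have t: "t > 0" using a by (simp add: t_def add_pos_nonneg)
  have "2 * a \<le> t * k"
    using assms(1)[OF t] t by (simp add: power2_eq_square mult.assoc)
  also have "\<dots> \<le> t * \<bar>k\<bar>" using t by (simp add: mult_left_mono)
  also have "\<dots> < a" using a by (simp add: t_def field_simps)
  finally show False using a by simp
qed

text \<open>The perturbation v + t w with w = M v - c v gives 2 t |w|^2 \<le> O(t^2).\<close>
lemma symmetric_matrix_rayleigh_maximiser_eigenvector:
  fixes M :: "real^'n^'n"
  assumes sym: "transpose M = M" and S: "subspace S" and inv: "\<forall>x\<in>S. M *v x \<in> S"
    and vS: "v \<in> S" and vv: "v \<bullet> v = 1"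
    and max: "\<And>u. u \<in> S \<Longrightarrow> u \<bullet> (M *v u) \<le> (v \<bullet> (M *v v)) * (u \<bullet> u)"
  shows "M *v v = (v \<bullet> (M *v v)) *\<^sub>R v"
proof -
  let ?q = "\<lambda>v. v \<bullet> (M *v v)"
  define c where "c = ?q v"
  define w where "w = M *v v - c *\<^sub>R v"
  have wS: "w \<in> S" unfolding w_def using inv S vS by (simp add: subspace_diff subspace_mul)
  have Mvw: "(M *v v) \<bullet> w = w \<bullet> w" and wv: "w \<bullet> v = 0"
    unfolding w_def by (simp_all add: inner_diff_left inner_diff_right c_def vv inner_commute)
  have Mwv: "(M *v w) \<bullet> v = w \<bullet> w"
    using Mvw symmetric_matrix_inner_commute[OF sym, of w v] by (simp add: inner_commute)
  have "w \<bullet> w = 0"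
  proof (rule nonneg_le_quadratic_imp_zero)
    fix t :: real assume "t > 0"
    have le: "?q (v + t *\<^sub>R w) \<le> c * ((v + t *\<^sub>R w) \<bullet> (v + t *\<^sub>R w))"
      unfolding c_def using max S vS wS by (simp add: subspace_add subspace_mul)
    have q: "?q (v + t *\<^sub>R w) = c + 2 * t * (w \<bullet> w) + t\<^sup>2 * ?q w"
      using Mvw Mwv by (simp add: matrix_vector_right_distrib matrix_vector_mult_scaleR
          c_def power2_eq_square inner_commute algebra_simps)
    have n: "(v + t *\<^sub>R w) \<bullet> (v + t *\<^sub>R w) = 1 + t\<^sup>2 * (w \<bullet> w)"
      using wv vv by (simp add: inner_add_left inner_add_right power2_eq_square inner_commute algebra_simps)
    from le show "2 * t * (w \<bullet> w) \<le> t\<^sup>2 * (c * (w \<bullet> w) - ?q w)"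
      unfolding q n by (simp add: algebra_simps)
  qed simp
  thus ?thesis unfolding w_def c_def by simp
qed

lemma symmetric_matrix_invariant_subspace_eigenvector:
  fixes M :: "real^'n^'n"
  assumes sym: "transpose M = M" and S: "subspace S" and inv: "\<forall>x\<in>S. M *v x \<in> S"
    and nontriv: "S \<noteq> {0}"
  obtains v c where "v \<in> S" "norm v = 1" "M *v v = c *\<^sub>R v"
proof -
  obtain x0 where x0: "x0 \<in> S" "x0 \<noteq> 0" using nontriv S subspace_0 by blast
  let ?K = "S \<inter> sphere 0 1"
  let ?q = "\<lambda>v. v \<bullet> (M *v v)"
  have "compact ?K" by (metis Int_commute closed_subspace compact_Int_closed compact_sphere S)
  moreover have "(1 / norm x0) *\<^sub>R x0 \<in> ?K" using x0 S by (simp add: subspace_mul)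
  moreover have "continuous_on ?K ?q"
    by (intro continuous_intros linear_continuous_on) (simp add: matrix_vector_mul_bounded_linear)
  ultimately obtain v where v: "v \<in> ?K" and vmax: "\<And>u. u \<in> ?K \<Longrightarrow> ?q u \<le> ?q v"
    using continuous_attains_sup[of ?K ?q] by blast
  have vS: "v \<in> S" and nv: "norm v = 1" using v by auto
  have "?q u \<le> ?q v * (u \<bullet> u)" if "u \<in> S" for u
  proof (cases "u = 0")
    case False
    have "(1 / norm u) *\<^sub>R u \<in> ?K" using that False S by (simp add: subspace_mul)
    hence "?q ((1 / norm u) *\<^sub>R u) \<le> ?q v" using vmax by blast
    hence "(1 / norm u)\<^sup>2 * ?q u \<le> ?q v"
      by (simp add: matrix_vector_mult_scaleR power2_eq_square mult.assoc)
    thus ?thesis using False by (simp add: power2_norm_eq_inner[symmetric] field_simps)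
  qed simp
  hence "M *v v = ?q v *\<^sub>R v"
    using nv by (intro symmetric_matrix_rayleigh_maximiser_eigenvector[OF sym S inv vS]) (simp_all add: norm_eq_1)
  with vS nv that show ?thesis by blast
qed

lemma symmetric_matrix_invariant_subspace_eigenbasis:
  fixes M :: "real^'n^'n"
  assumes sym: "transpose M = M"
  shows "subspace S \<Longrightarrow> \<forall>x\<in>S. M *v x \<in> S \<Longrightarrow>
    \<exists>B. B \<subseteq> S \<and> pairwise orthogonal B \<and> (\<forall>v\<in>B. norm v = 1 \<and> (\<exists>c. M *v v = c *\<^sub>R v)) \<and> span B = S"
proof (induction "dim S" arbitrary: S rule: less_induct)
  case less
  show ?case
  proof (cases "S = {0}")
    case True thus ?thesis by (intro exI[of _ "{}"]) auto
  next
    case False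
    obtain v c where vS: "v \<in> S" and nv: "norm v = 1" and Mv: "M *v v = c *\<^sub>R v"
      using symmetric_matrix_invariant_subspace_eigenvector[OF sym less.prems False] by blast
    have vv: "v \<bullet> v = 1" using nv by (simp add: norm_eq_1)
    define S' where "S' = {u\<in>S. u \<bullet> v = 0}"
    have subS': "subspace S'" unfolding S'_def using less.prems(1)
      by (auto simp: subspace_def inner_add_left)
    have invS': "\<forall>x\<in>S'. M *v x \<in> S'"
      using less.prems(2) unfolding S'_def by (auto simp: symmetric_matrix_inner_commute[OF sym] Mv)
    have "S' \<subset> S" using vS vv unfolding S'_def by force
    hence "dim S' < dim S"
      using dim_psubset subS' less.prems(1) by (metis span_eq_iff)
    then obtain B' where B': "B' \<subseteq> S'" "pairwise orthogonal B'"
      "\<forall>u\<in>B'. norm u = 1 \<and> (\<exists>c. M *v u = c *\<^sub>R u)" "span B' = S'"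
      using less.hyps[OF _ subS' invS'] by blast
    have sub: "insert v B' \<subseteq> S" using B'(1) vS unfolding S'_def by auto
    have "S \<subseteq> span (insert v B')"
    proof
      fix x assume xS: "x \<in> S"
      have "x - (x \<bullet> v) *\<^sub>R v \<in> S'" unfolding S'_def using xS vS less.prems(1) vv
        by (simp add: subspace_diff subspace_mul inner_diff_left)
      hence "x - (x \<bullet> v) *\<^sub>R v \<in> span (insert v B')"
        using B'(4) by (metis span_mono subset_insertI subsetD)
      moreover have "(x \<bullet> v) *\<^sub>R v \<in> span (insert v B')" by (simp add: span_base span_mul)
      ultimately show "x \<in> span (insert v B')" using span_add by fastforce
    qed
    moreover have "span (insert v B') \<subseteq> S" using sub less.prems(1) by (simp add: span_minimal)
    moreover have "pairwise orthogonal (insert v B')"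
      using B'(1,2) unfolding pairwise_insert S'_def orthogonal_def by (auto simp: inner_commute)
    ultimately show ?thesis using sub B'(3) nv Mv by (intro exI[of _ "insert v B'"]) auto
  qed
qed

text \<open>A permutation maximising the sum over k of rank(k) * \<nu>(p k) is sorted: exchanging an
  inversion would increase the sum.\<close>
lemma sorting_permutation:
  fixes \<nu> :: "'n::{finite,linorder} \<Rightarrow> real"
  obtains p where "p permutes UNIV" "mono (\<nu> \<circ> p)"
proof -
  define r where "r i = real (card {j. j < i})" for i :: 'n
  have r_strict_mono: "r i < r j" if "i < j" for i j
  proof -
    have "{k. k < i} \<subset> {k. k < j}" using that by auto
    thus ?thesis by (simp add: r_def psubset_card_mono)
  qed
  define F where "F p = (\<Sum>k\<in>UNIV. r k * \<nu> (p k))" for p :: "'n \<Rightarrow> 'n"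
  let ?P = "{p. p permutes (UNIV::'n set)}"
  have fin: "finite (F ` ?P)" by (simp add: finite_permutations)
  moreover have "F ` ?P \<noteq> {}" using permutes_id by blast
  ultimately have "Max (F ` ?P) \<in> F ` ?P" by (rule Max_in)
  then obtain p where pP: "p permutes UNIV" and pm: "F p = Max (F ` ?P)" by auto
  have pmax: "F q \<le> F p" if "q permutes UNIV" for q using Max_ge[OF fin] that pm by auto
  have "\<nu> (p i) \<le> \<nu> (p j)" if ij: "i \<le> j" for i j
  proof (rule ccontr)
    assume neg: "\<not> \<nu> (p i) \<le> \<nu> (p j)"
    hence ilj: "i < j" using ij by (cases "i = j") auto
    define q where "q = p \<circ> Transposition.transpose i j"
    have "q permutes UNIV" unfolding q_def using pP
      by (simp add: permutes_compose permutes_swap_id)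
    hence "F q \<le> F p" by (rule pmax)
    moreover have "F q = F p + (r j - r i) * (\<nu> (p i) - \<nu> (p j))"
    proof -
      have "r k * \<nu> (q k) = r k * \<nu> (p k) + (if k = i then r i * (\<nu> (p j) - \<nu> (p i)) else 0)
           + (if k = j then r j * (\<nu> (p i) - \<nu> (p j)) else 0)" for k
        using ilj by (auto simp: q_def algebra_simps)
      hence "F q = (\<Sum>k\<in>UNIV. r k * \<nu> (p k) + (if k = i then r i * (\<nu> (p j) - \<nu> (p i)) else 0)
           + (if k = j then r j * (\<nu> (p i) - \<nu> (p j)) else 0))" unfolding F_def by simp
      also have "\<dots> = F p + r i * (\<nu> (p j) - \<nu> (p i)) + r j * (\<nu> (p i) - \<nu> (p j))"
        unfolding F_def by (simp add: sum.distrib)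
      finally show ?thesis by (simp add: algebra_simps)
    qed
    moreover have "(r j - r i) * (\<nu> (p i) - \<nu> (p j)) > 0" using r_strict_mono[OF ilj] neg by simp
    ultimately show False by simp
  qed
  with pP that show ?thesis by (simp add: mono_def)
qed

lemma eigenvector_columns_diagonalization:
  fixes M W :: "real^'n^'n"
  assumes W: "orthogonal_matrix W" and eig: "\<And>k. M *v column k W = \<mu> $ k *\<^sub>R column k W"
  shows "M = W ** diag_mat \<mu> ** transpose W"
proof -
  have "(M ** W) $ r $ k = (W ** diag_mat \<mu>) $ r $ k" for r k
  proof -
    have "(M ** W) $ r $ k = (M *v column k W) $ r"
      by (simp add: matrix_matrix_mult_def matrix_vector_mult_def column_def)
    also have "\<dots> = W $ r $ k * \<mu> $ k" unfolding eig by (simp add: column_def mult.commute)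
    finally show ?thesis by (simp add: mult_diag_mat_nth)
  qed
  hence "M ** W = W ** diag_mat \<mu>" by (simp add: vec_eq_iff)
  moreover have "M = M ** (W ** transpose W)" using W by (simp add: orthogonal_matrix_def)
  ultimately show ?thesis by (metis matrix_mul_assoc)
qed

theorem symmetric_matrix_sorted_diagonalization:
  fixes M :: "real^('n::{finite,linorder})^('n::{finite,linorder})"
  assumes "transpose M = M"
  obtains W \<mu> where "orthogonal_matrix W" "mono (vec_nth \<mu>)" "M = W ** diag_mat \<mu> ** transpose W"
proof -
  obtain B where B: "pairwise orthogonal B" "\<forall>v\<in>B. norm v = 1 \<and> (\<exists>c. M *v v = c *\<^sub>R v)"
    "span B = UNIV"
    using symmetric_matrix_invariant_subspace_eigenbasis[OF assms, of UNIV] by auto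
  have indep: "independent B" using B(1,2) by (intro pairwise_orthogonal_independent) auto
  hence "card B = CARD('n)" using basis_card_eq_dim[of B UNIV] B(3) by auto
  then obtain e where e: "bij_betw e (UNIV::'n set) B"
    using finite_same_card_bij[of "UNIV::'n set" B] finiteI_independent[OF indep] by auto
  have eB: "e k \<in> B" for k using e by (auto simp: bij_betw_def)
  define \<nu> where "\<nu> k = (SOME c. M *v e k = c *\<^sub>R e k)" for k
  have eig: "M *v e k = \<nu> k *\<^sub>R e k" for k
    unfolding \<nu>_def using B(2) eB[of k] by (metis (mono_tags, lifting) someI_ex)
  obtain p where p: "p permutes UNIV" "mono (\<nu> \<circ> p)" using sorting_permutation by blast
  define W :: "real^('n::{finite,linorder})^('n::{finite,linorder})" where "W = (\<chi> r k. e (p k) $ r)"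
  define \<mu> :: "real^('n::{finite,linorder})" where "\<mu> = (\<chi> k. \<nu> (p k))"
  have colW: "column k W = e (p k)" for k by (simp add: W_def column_def vec_eq_iff)
  have inj_ep: "inj (e \<circ> p)"
    using p(1) e by (metis bij_betw_def inj_compose permutes_inj)
  have oW: "orthogonal_matrix W"
    unfolding orthogonal_matrix_orthonormal_columns colW
  proof (intro conjI allI impI)
    fix i show "norm (e (p i)) = 1" using B(2) eB by blast
  next
    fix i j :: 'n assume "i \<noteq> j"
    hence "e (p i) \<noteq> e (p j)" using inj_ep by (metis comp_apply injD)
    thus "orthogonal (e (p i)) (e (p j))" using B(1) eB by (meson pairwiseD)
  qed
  moreover have "mono (vec_nth \<mu>)" using p(2) by (simp add: \<mu>_def mono_def)
  moreover have "M = W ** diag_mat \<mu> ** transpose W"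
    using oW eig by (intro eigenvector_columns_diagonalization) (simp_all add: colW \<mu>_def)
  ultimately show ?thesis using that by blast
qed

section \<open>Sorted eigenvalues\<close>

definition const_poly_matrix :: "'a::zero^'n^'m \<Rightarrow> 'a poly^'n^'m" where
  "const_poly_matrix X = (\<chi> i j. [:X $ i $ j:])"

lemma const_poly_matrix_mult:
  "const_poly_matrix (X ** Y) = const_poly_matrix X ** const_poly_matrix (Y :: 'a::comm_semiring_1^_^_)"
  by (simp add: const_poly_matrix_def matrix_matrix_mult_def vec_eq_iff sum_to_poly mult.commute)

lemma const_poly_matrix_transpose: "const_poly_matrix (transpose X) = transpose (const_poly_matrix X)"
  by (simp add: const_poly_matrix_def transpose_def vec_eq_iff)

lemma const_poly_matrix_one: "const_poly_matrix (mat 1) = (mat 1 :: 'a::comm_semiring_1 poly^'n^'n)"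
  by (simp add: const_poly_matrix_def mat_def vec_eq_iff)

lemma char_poly_mat_eq_det: "char_poly_mat A = det (mat [:0, 1:] - const_poly_matrix A)"
  unfolding char_poly_mat_def const_poly_matrix_def mat_def
  by (rule arg_cong[where f=det]) (simp add: vec_eq_iff)

lemma char_poly_mat_orthogonal_diagonalization:
  fixes W :: "real^'n^'n"
  assumes "orthogonal_matrix W"
  shows "char_poly_mat (W ** diag_mat \<mu> ** transpose W) = (\<Prod>i\<in>UNIV. [:- (\<mu> $ i), 1:])"
proof -
  let ?C = "const_poly_matrix W" and ?X = "mat [:0, 1:] :: real poly^'n^'n"
  have CC: "?C ** transpose ?C = mat 1"
    using assms by (metis const_poly_matrix_mult const_poly_matrix_one const_poly_matrix_transpose
        orthogonal_matrix_def)
  hence "?X = ?C ** ?X ** transpose ?C"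
    by (metis matrix_mul_assoc matrix_mul_rid mat_mult_commute)
  hence "?X - const_poly_matrix (W ** diag_mat \<mu> ** transpose W)
      = ?C ** (?X - const_poly_matrix (diag_mat \<mu>)) ** transpose ?C"
    by (simp add: const_poly_matrix_mult const_poly_matrix_transpose matrix_diff_ldistrib
        matrix_diff_rdistrib)
  hence "char_poly_mat (W ** diag_mat \<mu> ** transpose W)
      = det (?X - const_poly_matrix (diag_mat \<mu>)) * det (?C ** transpose ?C)"
    by (simp add: char_poly_mat_eq_det det_mul)
  also have "\<dots> = det (?X - const_poly_matrix (diag_mat \<mu>))" using CC by simp
  also have "\<dots> = (\<Prod>i\<in>UNIV. [:- (\<mu> $ i), 1:])"
    by (subst det_diagonal) (simp_all add: mat_def const_poly_matrix_def diag_mat_def)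
  finally show ?thesis .
qed

lemma order_linear_factor: "order a [:- b, 1:] = (if b = (a :: 'a::idom) then 1 else 0)"
  using order_power_n_n[of a 1] by (auto intro: order_0I)

lemma order_prod_linear_factors:
  assumes "finite A"
  shows "order a (\<Prod>i\<in>A. [:- l i, 1:]) = card {i\<in>A. l i = (a :: 'a::idom)}"
  using assms
proof (induction A rule: finite_induct)
  case (insert x A)
  have "\<forall>i. [:- l i, 1:] \<noteq> (0 :: 'a poly)" by simp
  hence "(\<Prod>i\<in>insert x A. [:- l i, 1:]) \<noteq> 0"
    using insert(1) by (simp only: prod_zero_iff finite_insert) blast
  hence "[:- l x, 1:] * (\<Prod>i\<in>A. [:- l i, 1:]) \<noteq> 0" using insert(1,2) by simp
  hence "order a (\<Prod>i\<in>insert x A. [:- l i, 1:]) = order a [:- l x, 1:] + order a (\<Prod>i\<in>A. [:- l i, 1:])"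
    using insert(1,2) by (simp add: order_mult del: mult_pCons_left)
  moreover have "{i\<in>insert x A. l i = a}
      = (if l x = a then insert x {i\<in>A. l i = a} else {i\<in>A. l i = a})" by auto
  hence "card {i\<in>insert x A. l i = a} = (if l x = a then 1 else 0) + card {i\<in>A. l i = a}"
    using insert(1,2) by simp
  ultimately show ?case using insert(3) by (simp add: order_linear_factor)
qed simp

lemma card_level_set_less_at_first_difference:
  fixes l m :: "'n::{finite,linorder} \<Rightarrow> 'a::linorder"
  assumes "mono m" and agree: "\<And>j. j < i \<Longrightarrow> l j = m j" and "l i < m i"
  shows "card {j. m j = l i} < card {j. l j = l i}"
proof -
  have "{j. m j = l i} \<subseteq> {j. j < i \<and> l j = l i}"
  proof
    fix j assume "j \<in> {j. m j = l i}"
    moreover have "j < i"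
    proof (rule ccontr)
      assume "\<not> j < i"
      hence "m i \<le> m j" using monoD[OF \<open>mono m\<close>] by simp
      thus False using \<open>j \<in> {j. m j = l i}\<close> \<open>l i < m i\<close> by simp
    qed
    ultimately show "j \<in> {j. j < i \<and> l j = l i}" using agree by auto
  qed
  also have "\<dots> \<subset> {j. l j = l i}" by auto
  finally show ?thesis by (simp add: psubset_card_mono)
qed

lemma mono_eq_if_level_set_cards_eq:
  fixes l m :: "'n::{finite,linorder} \<Rightarrow> 'a::linorder"
  assumes "mono l" "mono m" and cnt: "\<And>a. card {i. l i = a} = card {i. m i = a}"
  shows "l = m"
proof (rule ccontr)
  assume "l \<noteq> m"
  hence ne: "{i. l i \<noteq> m i} \<noteq> {}" by auto
  define i where "i = Min {i. l i \<noteq> m i}"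
  have "l i \<noteq> m i" using Min_in[OF _ ne] i_def by auto
  moreover have agree: "l j = m j" if "j < i" for j
    using that Min_le[of "{i. l i \<noteq> m i}" j] unfolding i_def by fastforce
  ultimately consider "l i < m i" | "m i < l i" by fastforce
  thus False
  proof cases
    case 1
    with card_level_set_less_at_first_difference[OF \<open>mono m\<close> agree] cnt show False by simp
  next
    case 2
    have "card {j. l j = m i} < card {j. m j = m i}"
      by (rule card_level_set_less_at_first_difference[OF \<open>mono l\<close>]) (use agree 2 in auto)
    with cnt[of "m i"] show False by simp
  qed
qed

lemma sorted_eigenvalues_orthogonal_diagonalization:
  fixes W :: "real^('n::{finite,linorder})^('n::{finite,linorder})"
  assumes "orthogonal_matrix W" and "mono (vec_nth \<mu>)"
  shows "sorted_eigenvalues (W ** diag_mat \<mu> ** transpose W) = \<mu>"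
  unfolding sorted_eigenvalues_def
proof (rule the_equality)
  show "(\<forall>i j. i \<le> j \<longrightarrow> \<mu> $ i \<le> \<mu> $ j) \<and>
      char_poly_mat (W ** diag_mat \<mu> ** transpose W) = (\<Prod>i\<in>UNIV. [:- \<mu> $ i, 1:])"
    using assms by (simp add: char_poly_mat_orthogonal_diagonalization mono_def)
next
  fix l :: "real^('n::{finite,linorder})"
  assume l: "(\<forall>i j. i \<le> j \<longrightarrow> l $ i \<le> l $ j) \<and>
      char_poly_mat (W ** diag_mat \<mu> ** transpose W) = (\<Prod>i\<in>UNIV. [:- l $ i, 1:])"
  hence "(\<Prod>i\<in>UNIV. [:- l $ i, 1:]) = (\<Prod>i\<in>UNIV. [:- \<mu> $ i, 1:])"
    using char_poly_mat_orthogonal_diagonalization[OF assms(1)] by simp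
  hence "card {i. l $ i = a} = card {i. \<mu> $ i = a}" for a
    using order_prod_linear_factors[of UNIV a "vec_nth l"]
      order_prod_linear_factors[of UNIV a "vec_nth \<mu>"] by simp
  hence "vec_nth l = vec_nth \<mu>"
    using l assms(2) by (intro mono_eq_if_level_set_cards_eq) (auto simp: mono_def)
  thus "l = \<mu>" by (simp add: vec_eq_iff fun_eq_iff)
qed

lemma sorted_eigenvalues_mono:
  fixes A :: "real^('n::{finite,linorder})^('n::{finite,linorder})"
  assumes "transpose A = A"
  shows "mono (vec_nth (sorted_eigenvalues A))"
proof -
  obtain W \<mu> where W: "orthogonal_matrix W" and \<mu>: "mono (vec_nth \<mu>)"
    and "A = W ** diag_mat \<mu> ** transpose W"
    using symmetric_matrix_sorted_diagonalization[OF assms] .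
  thus ?thesis using sorted_eigenvalues_orthogonal_diagonalization[OF W \<mu>] \<mu> by simp
qed

section \<open>Perturbation of sorted eigenvalues\<close>

lemma down_closed_eq_if_card_eq:
  fixes D1 D2 :: "'n::{finite,linorder} set"
  assumes "\<And>x y. x \<in> D1 \<Longrightarrow> y \<le> x \<Longrightarrow> y \<in> D1" "\<And>x y. x \<in> D2 \<Longrightarrow> y \<le> x \<Longrightarrow> y \<in> D2"
    and "card D1 = card D2"
  shows "D1 = D2"
proof -
  have "D1 \<subseteq> D2 \<or> D2 \<subseteq> D1" using assms(1,2) by (metis linear subsetI)
  thus ?thesis using assms(3) by (metis card_subset_eq finite)
qed

text \<open>The entries of the overlap matrix P = U^t W satisfy
  (mu b - lam a) P a b = (U^t (M - A) W) a b, so the mass of the b-th column of P on eigenvalues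
  lam a far from mu b is small.\<close>
locale orthogonal_eigen_perturbation =
  fixes U W :: "real^('n::{finite,linorder})^('n::{finite,linorder})"
    and lam mu :: "real^('n::{finite,linorder})"
    and A M :: "real^('n::{finite,linorder})^('n::{finite,linorder})"
  assumes U: "orthogonal_matrix U" and W: "orthogonal_matrix W"
    and A_eq: "A = U ** diag_mat lam ** transpose U"
    and M_eq: "M = W ** diag_mat mu ** transpose W"
begin

definition "P = transpose U ** W"

lemma orthogonal_P: "orthogonal_matrix P"
  unfolding P_def using U W by (simp add: orthogonal_matrix_mul)

lemma transpose_U_congruence_eq:
  "transpose U ** (U ** diag_mat g ** transpose U) ** W = diag_mat g ** P"
  "transpose U ** M ** W = P ** diag_mat mu"
  using U W unfolding M_eq P_def orthogonal_matrix_def by (metis matrix_mul_assoc matrix_mul_lid matrix_mul_rid)+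

lemma column_mass_power2_le:
  "(\<Sum>a\<in>UNIV. ((mu $ b - lam $ a) * P $ a $ b)\<^sup>2) \<le> (norm (M - A))\<^sup>2"
proof -
  let ?Q = "transpose U ** (M - A) ** W"
  have "?Q = P ** diag_mat mu - diag_mat lam ** P"
    using transpose_U_congruence_eq
    by (simp add: A_eq matrix_diff_ldistrib matrix_diff_rdistrib)
  hence "?Q $ a $ b = (P ** diag_mat mu) $ a $ b - (diag_mat lam ** P) $ a $ b" for a b by simp
  hence Q: "?Q $ a $ b = (mu $ b - lam $ a) * P $ a $ b" for a b
    by (simp add: diag_mat_mult_nth mult_diag_mat_nth algebra_simps)
  have "(\<Sum>a\<in>UNIV. (?Q $ a $ b)\<^sup>2) \<le> (\<Sum>a\<in>UNIV. \<Sum>b'\<in>UNIV. (?Q $ a $ b')\<^sup>2)"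
    by (intro sum_mono member_le_sum) auto
  also have "\<dots> = (norm (M - A))\<^sup>2"
    using norm_matrix_power2[of ?Q] norm_orthogonal_congruence[OF U W] by simp
  finally show ?thesis by (simp add: Q)
qed

lemma column_mass_far_le:
  assumes r: "r > 0" and far: "\<And>a. a \<in> T \<Longrightarrow> r \<le> \<bar>mu $ b - lam $ a\<bar>"
  shows "(\<Sum>a\<in>T. (P $ a $ b)\<^sup>2) \<le> (norm (M - A))\<^sup>2 / r\<^sup>2"
proof -
  have "r\<^sup>2 * (\<Sum>a\<in>T. (P $ a $ b)\<^sup>2) = (\<Sum>a\<in>T. r\<^sup>2 * (P $ a $ b)\<^sup>2)" by (simp add: sum_distrib_left)
  also have "\<dots> \<le> (\<Sum>a\<in>T. ((mu $ b - lam $ a) * P $ a $ b)\<^sup>2)"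
  proof (rule sum_mono)
    fix a assume "a \<in> T"
    hence "r\<^sup>2 \<le> (mu $ b - lam $ a)\<^sup>2" using far r by (metis abs_le_square_iff abs_of_pos)
    thus "r\<^sup>2 * (P $ a $ b)\<^sup>2 \<le> ((mu $ b - lam $ a) * P $ a $ b)\<^sup>2"
      by (simp add: mult_right_mono power_mult_distrib)
  qed
  also have "\<dots> \<le> (\<Sum>a\<in>UNIV. ((mu $ b - lam $ a) * P $ a $ b)\<^sup>2)" by (intro sum_mono2) auto
  also have "\<dots> \<le> (norm (M - A))\<^sup>2" by (rule column_mass_power2_le)
  finally show ?thesis using r by (simp add: field_simps)
qed

lemma exists_close_eigenvalue: "\<exists>a. \<bar>mu $ b - lam $ a\<bar> \<le> norm (M - A)"
proof (rule ccontr)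
  assume "\<nexists>a. \<bar>mu $ b - lam $ a\<bar> \<le> norm (M - A)"
  hence far: "norm (M - A) < \<bar>mu $ b - lam $ a\<bar>" for a by (simp add: not_le)
  define m where "m = Min (range (\<lambda>a. \<bar>mu $ b - lam $ a\<bar>))"
  have "m \<in> range (\<lambda>a. \<bar>mu $ b - lam $ a\<bar>)" unfolding m_def by (rule Min_in) auto
  hence m: "norm (M - A) < m" using far by auto
  hence "0 < m" using norm_ge_zero[of "M - A"] by linarith
  hence "(\<Sum>a\<in>UNIV. (P $ a $ b)\<^sup>2) \<le> (norm (M - A))\<^sup>2 / m\<^sup>2"
    by (rule column_mass_far_le) (simp add: m_def)
  hence "m\<^sup>2 \<le> (norm (M - A))\<^sup>2"
    using orthogonal_matrix_column_sum_power2[OF orthogonal_P] \<open>0 < m\<close> by (simp add: field_simps)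
  moreover have "(norm (M - A))\<^sup>2 < m\<^sup>2" using m by (intro power_strict_mono) auto
  ultimately show False by simp
qed

lemma card_le_if_columns_concentrated:
  assumes concentrated: "\<And>b. b \<in> S \<Longrightarrow> (\<Sum>a\<in>-T. (P $ a $ b)\<^sup>2) \<le> \<delta>"
    and small: "real CARD('n) * \<delta> < 1"
  shows "card S \<le> card T"
proof (cases "S = {}")
  case False
  have "(\<Sum>b\<in>S. 1 - \<delta>) \<le> (\<Sum>b\<in>S. \<Sum>a\<in>T. (P $ a $ b)\<^sup>2)"
  proof (rule sum_mono)
    fix b assume "b \<in> S"
    have "(\<Sum>a\<in>UNIV. (P $ a $ b)\<^sup>2) = (\<Sum>a\<in>T. (P $ a $ b)\<^sup>2) + (\<Sum>a\<in>-T. (P $ a $ b)\<^sup>2)"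
      by (metis Compl_eq_Diff_UNIV add.commute finite sum.subset_diff top_greatest)
    thus "1 - \<delta> \<le> (\<Sum>a\<in>T. (P $ a $ b)\<^sup>2)"
      using orthogonal_matrix_column_sum_power2[OF orthogonal_P, of b] concentrated[OF \<open>b \<in> S\<close>] by simp
  qed
  also have "\<dots> = (\<Sum>a\<in>T. \<Sum>b\<in>S. (P $ a $ b)\<^sup>2)" by (rule sum.swap)
  also have "\<dots> \<le> (\<Sum>a\<in>T. \<Sum>b\<in>UNIV. (P $ a $ b)\<^sup>2)" by (intro sum_mono sum_mono2) auto
  also have "\<dots> = card T" using orthogonal_matrix_row_sum_power2[OF orthogonal_P] by simp
  finally have le: "real (card S) * (1 - \<delta>) \<le> card T" by simp
  obtain b where "b \<in> S" using False by auto
  have "0 \<le> (\<Sum>a\<in>-T. (P $ a $ b)\<^sup>2)" by (intro sum_nonneg) simp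
  hence "\<delta> \<ge> 0" using concentrated[OF \<open>b \<in> S\<close>] by linarith
  hence "real (card S) * \<delta> \<le> real CARD('n) * \<delta>" by (simp add: card_mono mult_right_mono)
  hence "real (card S) < real (card T) + 1" using le small by (simp add: algebra_simps)
  thus ?thesis by simp
qed simp

text \<open>An eigenvector of M below t has almost all of its mass on the eigenvectors of A below t,
  and vice versa, so the two index sets have equal size.\<close>
lemma sorted_eigenvalues_below_eq:
  assumes lam: "mono (vec_nth lam)" and mu: "mono (vec_nth mu)"
    and r: "r > 0" and far: "\<And>c. r \<le> \<bar>lam $ c - t\<bar>"
    and small: "real CARD('n) * ((norm (M - A))\<^sup>2 / r\<^sup>2) < 1"
  shows "{b. mu $ b < t} = {a. lam $ a < t}"
proof -
  define S where "S = {b. mu $ b < t}"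
  define T where "T = {a. lam $ a < t}"
  have "card S \<le> card T"
  proof (rule card_le_if_columns_concentrated[OF _ small])
    fix b assume "b \<in> S"
    show "(\<Sum>a\<in>-T. (P $ a $ b)\<^sup>2) \<le> (norm (M - A))\<^sup>2 / r\<^sup>2"
    proof (rule column_mass_far_le[OF r])
      fix a assume "a \<in> -T"
      hence "t + r \<le> lam $ a" using far[of a] by (simp add: T_def)
      thus "r \<le> \<bar>mu $ b - lam $ a\<bar>" using \<open>b \<in> S\<close> by (simp add: S_def)
    qed
  qed
  moreover have "card (-S) \<le> card (-T)"
  proof (rule card_le_if_columns_concentrated[OF _ small])
    fix b assume "b \<in> -S"
    show "(\<Sum>a\<in>- (-T). (P $ a $ b)\<^sup>2) \<le> (norm (M - A))\<^sup>2 / r\<^sup>2"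
    proof (rule column_mass_far_le[OF r])
      fix a assume "a \<in> - (-T)"
      hence "lam $ a \<le> t - r" using far[of a] by (simp add: T_def)
      thus "r \<le> \<bar>mu $ b - lam $ a\<bar>" using \<open>b \<in> -S\<close> by (simp add: S_def)
    qed
  qed
  moreover have "card (-S) = CARD('n) - card S" "card (-T) = CARD('n) - card T"
    by (simp_all add: Compl_eq_Diff_UNIV card_Diff_subset)
  moreover have "card S \<le> CARD('n)" "card T \<le> CARD('n)" by (simp_all add: card_mono)
  ultimately have "card S = card T" by linarith
  moreover have "x \<in> S \<Longrightarrow> y \<le> x \<Longrightarrow> y \<in> S" for x y using monoD[OF mu, of y x] by (simp add: S_def)
  moreover have "x \<in> T \<Longrightarrow> y \<le> x \<Longrightarrow> y \<in> T" for x y using monoD[OF lam, of y x] by (simp add: T_def)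
  ultimately show ?thesis unfolding S_def T_def by (rule down_closed_eq_if_card_eq[rotated 2])
qed

lemma sorted_eigenvalue_perturbation_le:
  assumes lam: "mono (vec_nth lam)" and mu: "mono (vec_nth mu)"
    and g: "g > 0" and gap: "\<And>a b. lam $ a \<noteq> lam $ b \<Longrightarrow> g \<le> \<bar>lam $ a - lam $ b\<bar>"
    and small: "2 * (real CARD('n) + 1) * norm (M - A) < g"
  shows "\<bar>mu $ b - lam $ b\<bar> \<le> norm (M - A)"
proof -
  define e where "e = norm (M - A)"
  define n where "n = real CARD('n)"
  have e0: "e \<ge> 0" and n0: "n \<ge> 0" by (simp_all add: e_def n_def)
  have "2 * e \<le> 2 * (n + 1) * e" using e0 n0 by (simp add: mult_right_mono)
  hence eg: "e < g / 2" using small by (simp add: e_def n_def)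
  have "4 * n * e\<^sup>2 \<le> (2 * (n + 1) * e)\<^sup>2"
    using e0 n0 by (simp add: power2_eq_square algebra_simps mult_nonneg_nonneg)
  also have "\<dots> < g\<^sup>2" using small e0 n0 by (intro power_strict_mono) (simp_all add: e_def n_def)
  finally have small': "n * (e\<^sup>2 / (g / 2)\<^sup>2) < 1" using g by (simp add: field_simps power2_eq_square)
  obtain a where a: "\<bar>mu $ b - lam $ a\<bar> \<le> e" using exists_close_eigenvalue unfolding e_def by blast
  have "lam $ a = lam $ b"
  proof (rule ccontr)
    assume ne: "lam $ a \<noteq> lam $ b"
    define t where "t = min (lam $ a) (lam $ b) + g / 2"
    have far: "g / 2 \<le> \<bar>lam $ c - t\<bar>" for c
      using gap[of c a] gap[of c b] g by (cases "lam $ c = lam $ a"; cases "lam $ c = lam $ b")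
        (auto simp: t_def abs_if min_def split: if_splits)
    hence "{c. mu $ c < t} = {c. lam $ c < t}"
      using g small' by (intro sorted_eigenvalues_below_eq[OF lam mu _ far]) (simp_all add: e_def n_def)
    hence "mu $ b < t \<longleftrightarrow> lam $ b < t" by blast
    thus False using gap[OF ne] a eg by (auto simp: t_def abs_if min_def split: if_splits)
  qed
  thus ?thesis using a by (simp add: e_def)
qed

lemma inner_diagonalized_eq:
  "(U ** diag_mat g ** transpose U) \<bullet> M = (\<Sum>a\<in>UNIV. \<Sum>b\<in>UNIV. g $ a * mu $ b * (P $ a $ b)\<^sup>2)"
proof -
  have "(U ** diag_mat g ** transpose U) \<bullet> M = (diag_mat g ** P) \<bullet> (P ** diag_mat mu)"
    using inner_orthogonal_congruence[OF U W] transpose_U_congruence_eq by metis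
  thus ?thesis
    unfolding inner_matrix diag_mat_mult_nth mult_diag_mat_nth by (simp add: power2_eq_square ac_simps)
qed

lemma inner_eigenvalues_eq: "g \<bullet> mu = (\<Sum>a\<in>UNIV. \<Sum>b\<in>UNIV. g $ b * mu $ b * (P $ a $ b)\<^sup>2)"
proof -
  have "(\<Sum>a\<in>UNIV. \<Sum>b\<in>UNIV. g $ b * mu $ b * (P $ a $ b)\<^sup>2)
      = (\<Sum>b\<in>UNIV. g $ b * mu $ b * (\<Sum>a\<in>UNIV. (P $ a $ b)\<^sup>2))"
    by (subst sum.swap) (simp add: sum_distrib_left)
  thus ?thesis using orthogonal_matrix_column_sum_power2[OF orthogonal_P] by (simp add: inner_vec_def)
qed

lemma overlap_across_gap_le:
  assumes g: "g > 0" and gap: "g \<le> \<bar>lam $ a - lam $ b\<bar>"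
    and close: "\<bar>mu $ b - lam $ b\<bar> \<le> norm (M - A)" and small: "norm (M - A) \<le> g / 2"
  shows "(P $ a $ b)\<^sup>2 \<le> 4 / g\<^sup>2 * (norm (M - A))\<^sup>2"
proof -
  have "g / 2 \<le> \<bar>mu $ b - lam $ a\<bar>" using gap close small by linarith
  hence "(\<Sum>a'\<in>{a}. (P $ a' $ b)\<^sup>2) \<le> (norm (M - A))\<^sup>2 / (g / 2)\<^sup>2"
    using g by (intro column_mass_far_le) auto
  thus ?thesis by (simp add: power_divide field_simps)
qed

text \<open>Since gam is constant on each cluster of equal eigenvalues of A and the overlap P a b
  between clusters that are g apart is O(norm (M - A)), the first-order terms cancel.\<close>
lemma inner_eigenvalues_deviation_le:
  assumes g: "g > 0" and gap: "\<And>a b. lam $ a \<noteq> lam $ b \<Longrightarrow> g \<le> \<bar>lam $ a - lam $ b\<bar>"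
    and gam: "\<And>a b. lam $ a = lam $ b \<Longrightarrow> gam $ a = gam $ b"
    and close: "\<And>b. \<bar>mu $ b - lam $ b\<bar> \<le> norm (M - A)" and small: "norm (M - A) \<le> g / 2"
  shows "\<bar>gam \<bullet> mu - (U ** diag_mat gam ** transpose U) \<bullet> M\<bar>
     \<le> (\<Sum>a\<in>UNIV. \<Sum>b\<in>UNIV. \<bar>gam $ b - gam $ a\<bar> * (\<bar>lam $ b\<bar> + g) * (4 / g\<^sup>2)) * (norm (M - A))\<^sup>2"
proof -
  define e where "e = norm (M - A)"
  have "\<bar>gam \<bullet> mu - (U ** diag_mat gam ** transpose U) \<bullet> M\<bar>
      = \<bar>\<Sum>a\<in>UNIV. \<Sum>b\<in>UNIV. (gam $ b - gam $ a) * mu $ b * (P $ a $ b)\<^sup>2\<bar>"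
    unfolding inner_eigenvalues_eq inner_diagonalized_eq by (simp add: sum_subtractf[symmetric] algebra_simps)
  also have "\<dots> \<le> (\<Sum>a\<in>UNIV. \<Sum>b\<in>UNIV. \<bar>(gam $ b - gam $ a) * mu $ b * (P $ a $ b)\<^sup>2\<bar>)"
    by (rule order_trans[OF sum_abs sum_mono]) (rule sum_abs)
  also have "\<dots> \<le> (\<Sum>a\<in>UNIV. \<Sum>b\<in>UNIV. \<bar>gam $ b - gam $ a\<bar> * (\<bar>lam $ b\<bar> + g) * (4 / g\<^sup>2) * e\<^sup>2)"
  proof (intro sum_mono)
    fix a b
    show "\<bar>(gam $ b - gam $ a) * mu $ b * (P $ a $ b)\<^sup>2\<bar> \<le> \<bar>gam $ b - gam $ a\<bar> * (\<bar>lam $ b\<bar> + g) * (4 / g\<^sup>2) * e\<^sup>2"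
    proof (cases "lam $ a = lam $ b")
      case True
      thus ?thesis using gam[OF True] by simp
    next
      case False
      have "(P $ a $ b)\<^sup>2 \<le> 4 / g\<^sup>2 * e\<^sup>2"
        unfolding e_def using g gap[OF False] close small by (rule overlap_across_gap_le)
      moreover have "\<bar>mu $ b\<bar> \<le> \<bar>lam $ b\<bar> + g" using close[of b] small g by (simp add: e_def)
      ultimately have "\<bar>gam $ b - gam $ a\<bar> * \<bar>mu $ b\<bar> * (P $ a $ b)\<^sup>2
          \<le> \<bar>gam $ b - gam $ a\<bar> * (\<bar>lam $ b\<bar> + g) * (4 / g\<^sup>2 * e\<^sup>2)"
        using g by (intro mult_mono) auto
      moreover have "\<bar>(gam $ b - gam $ a) * mu $ b * (P $ a $ b)\<^sup>2\<bar>
          = \<bar>gam $ b - gam $ a\<bar> * \<bar>mu $ b\<bar> * (P $ a $ b)\<^sup>2" by (simp only: abs_mult abs_power2)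
      ultimately show ?thesis by (simp only: mult.assoc)
    qed
  qed
  also have "\<dots> = (\<Sum>a\<in>UNIV. \<Sum>b\<in>UNIV. \<bar>gam $ b - gam $ a\<bar> * (\<bar>lam $ b\<bar> + g) * (4 / g\<^sup>2)) * e\<^sup>2"
    by (simp add: sum_distrib_right)
  finally show ?thesis unfolding e_def .
qed

end

lemma symmetric_matrix_eigen_perturbation:
  fixes U A M :: "real^('n::{finite,linorder})^('n::{finite,linorder})"
  assumes "orthogonal_matrix U" "A = U ** diag_mat lam ** transpose U" "transpose M = M"
  obtains W where "orthogonal_eigen_perturbation U W lam (sorted_eigenvalues M) A M"
proof -
  obtain W \<mu> where W: "orthogonal_matrix W" "mono (vec_nth \<mu>)" "M = W ** diag_mat \<mu> ** transpose W"
    using symmetric_matrix_sorted_diagonalization[OF assms(3)] .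
  have \<mu>_eq: "sorted_eigenvalues M = \<mu>"
    by (subst W(3)) (rule sorted_eigenvalues_orthogonal_diagonalization[OF W(1,2)])
  show ?thesis
  proof (rule that, unfold_locales)
    show "M = W ** diag_mat (sorted_eigenvalues M) ** transpose W" unfolding \<mu>_eq by (rule W(3))
  qed (use W(1) assms(1,2) in auto)
qed

lemma exists_separation_gap:
  fixes lam :: "real^'n"
  obtains g where "g > 0" "\<And>a b. lam $ a \<noteq> lam $ b \<Longrightarrow> g \<le> \<bar>lam $ a - lam $ b\<bar>"
proof -
  let ?d = "\<lambda>p. \<bar>lam $ fst p - lam $ snd p\<bar>"
  define G where "G = insert 1 (?d ` UNIV - {0})"
  have "finite (?d ` UNIV)" by (rule finite_imageI) simp
  hence G: "finite G" "G \<noteq> {}" by (simp_all add: G_def)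
  have "0 < x" if "x \<in> G" for x
    using that unfolding G_def by (auto simp del: abs_eq_0_iff)
  hence "0 < Min G" using G by (simp add: Min_gr_iff)
  moreover have "Min G \<le> \<bar>lam $ a - lam $ b\<bar>" if "lam $ a \<noteq> lam $ b" for a b
  proof (rule Min_le[OF G(1)])
    have "?d (a, b) \<in> ?d ` UNIV" by (rule imageI) simp
    thus "\<bar>lam $ a - lam $ b\<bar> \<in> G" using that by (simp add: G_def)
  qed
  ultimately show ?thesis using that by blast
qed

lemma sorted_eigenvalues_perturbation_le:
  fixes U A M :: "real^('n::{finite,linorder})^('n::{finite,linorder})"
  assumes U: "orthogonal_matrix U" and A_eq: "A = U ** diag_mat lam ** transpose U"
    and lam: "mono (vec_nth lam)" and g: "g > 0"
    and gap: "\<And>a b. lam $ a \<noteq> lam $ b \<Longrightarrow> g \<le> \<bar>lam $ a - lam $ b\<bar>"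
    and M: "transpose M = M" and small: "2 * (real CARD('n) + 1) * norm (M - A) < g"
  shows "\<bar>sorted_eigenvalues M $ b - lam $ b\<bar> \<le> norm (M - A)"
proof -
  obtain W where "orthogonal_eigen_perturbation U W lam (sorted_eigenvalues M) A M"
    using symmetric_matrix_eigen_perturbation[OF U A_eq M] .
  then interpret orthogonal_eigen_perturbation U W lam "sorted_eigenvalues M" A M .
  show ?thesis
    by (rule sorted_eigenvalue_perturbation_le[OF lam sorted_eigenvalues_mono[OF M] g gap small])
qed

lemma inner_sorted_eigenvalues_deviation_le:
  fixes U A M :: "real^('n::{finite,linorder})^('n::{finite,linorder})"
  assumes U: "orthogonal_matrix U" and A_eq: "A = U ** diag_mat lam ** transpose U"
    and lam: "mono (vec_nth lam)" and g: "g > 0"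
    and gap: "\<And>a b. lam $ a \<noteq> lam $ b \<Longrightarrow> g \<le> \<bar>lam $ a - lam $ b\<bar>"
    and gam: "\<And>a b. lam $ a = lam $ b \<Longrightarrow> gam $ a = gam $ b"
    and M: "transpose M = M" and small: "2 * (real CARD('n) + 1) * norm (M - A) < g"
  shows "\<bar>gam \<bullet> sorted_eigenvalues M - (U ** diag_mat gam ** transpose U) \<bullet> M\<bar>
     \<le> (\<Sum>a\<in>UNIV. \<Sum>b\<in>UNIV. \<bar>gam $ b - gam $ a\<bar> * (\<bar>lam $ b\<bar> + g) * (4 / g\<^sup>2)) * (norm (M - A))\<^sup>2"
proof -
  obtain W where "orthogonal_eigen_perturbation U W lam (sorted_eigenvalues M) A M"
    using symmetric_matrix_eigen_perturbation[OF U A_eq M] .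
  then interpret orthogonal_eigen_perturbation U W lam "sorted_eigenvalues M" A M .
  have "2 * norm (M - A) \<le> 2 * (real CARD('n) + 1) * norm (M - A)"
    by (intro mult_right_mono) simp_all
  hence "norm (M - A) \<le> g / 2" using small by linarith
  thus ?thesis
    using sorted_eigenvalues_perturbation_le[OF U A_eq lam g gap M small]
    by (intro inner_eigenvalues_deviation_le[OF g gap gam])
qed

lemma has_derivative_within_if_quadratic_remainder:
  assumes L: "bounded_linear L" and r: "r > 0"
    and rem: "\<And>y. y \<in> S \<Longrightarrow> norm (y - a) < r \<Longrightarrow> norm (f y - f a - L (y - a)) \<le> K * (norm (y - a))\<^sup>2"
  shows "(f has_derivative L) (at a within S)"
  unfolding has_derivative_within_alt
proof (intro conjI L allI impI)
  fix e :: real assume e: "e > 0"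
  define d where "d = min r (e / (\<bar>K\<bar> + 1))"
  have d: "d > 0" using r e by (simp add: d_def)
  have "norm (f y - f a - L (y - a)) \<le> e * norm (y - a)" if "y \<in> S" "norm (y - a) < d" for y
  proof -
    have "norm (f y - f a - L (y - a)) \<le> K * norm (y - a) * norm (y - a)"
      using rem[OF that(1)] that(2) by (simp add: d_def power2_eq_square mult.assoc)
    also have "\<dots> \<le> e * norm (y - a)"
    proof (rule mult_right_mono)
      have "K * norm (y - a) \<le> (\<bar>K\<bar> + 1) * d" using that(2) by (intro mult_mono) auto
      also have "\<dots> \<le> (\<bar>K\<bar> + 1) * (e / (\<bar>K\<bar> + 1))" by (intro mult_left_mono) (simp_all add: d_def)
      also have "\<dots> = e" by simp
      finally show "K * norm (y - a) \<le> e" .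
    qed simp
    finally show ?thesis .
  qed
  thus "\<exists>d>0. \<forall>y\<in>S. norm (y - a) < d \<longrightarrow> norm (f y - f a - L (y - a)) \<le> e * norm (y - a)"
    using d by blast
qed

lemma has_derivative_compose_lipschitz:
  assumes J: "(J has_derivative J') (at (\<phi> a))"
    and J'\<phi>: "((\<lambda>y. J' (\<phi> y)) has_derivative L) (at a within S)"
    and r: "r > 0" and lip: "\<And>y. y \<in> S \<Longrightarrow> norm (y - a) < r \<Longrightarrow> norm (\<phi> y - \<phi> a) \<le> C * norm (y - a)"
  shows "((\<lambda>y. J (\<phi> y)) has_derivative L) (at a within S)"
  unfolding has_derivative_within_alt
proof (intro conjI allI impI)
  show "bounded_linear L" using J'\<phi> by (rule has_derivative_bounded_linear)
  have lin: "linear J'" using J by (simp add: has_derivative_linear)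
  fix e :: real assume e: "e > 0"
  define C' where "C' = \<bar>C\<bar> + 1"
  have C': "C' > 0" by (simp add: C'_def)
  have "e / 2 / C' > 0" using e C' by simp
  then obtain d1 where d1: "d1 > 0" and
    J_approx: "\<And>v. norm (v - \<phi> a) < d1 \<Longrightarrow> norm (J v - J (\<phi> a) - J' (v - \<phi> a)) \<le> e / 2 / C' * norm (v - \<phi> a)"
    using J unfolding has_derivative_at_alt by blast
  have "e / 2 > 0" using e by simp
  then obtain d2 where d2: "d2 > 0" and
    J'\<phi>_approx: "\<And>y. y \<in> S \<Longrightarrow> norm (y - a) < d2 \<Longrightarrow>
      norm (J' (\<phi> y) - J' (\<phi> a) - L (y - a)) \<le> e / 2 * norm (y - a)"
    using J'\<phi> unfolding has_derivative_within_alt by blast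
  define d where "d = min r (min d2 (d1 / C'))"
  have "norm (J (\<phi> y) - J (\<phi> a) - L (y - a)) \<le> e * norm (y - a)" if "y \<in> S" "norm (y - a) < d" for y
  proof -
    have "norm (\<phi> y - \<phi> a) \<le> C * norm (y - a)" using lip[OF that(1)] that(2) by (simp add: d_def)
    also have "\<dots> \<le> C' * norm (y - a)" by (intro mult_right_mono) (simp_all add: C'_def)
    finally have lip': "norm (\<phi> y - \<phi> a) \<le> C' * norm (y - a)" .
    have "norm (y - a) < d1 / C'" using that(2) by (simp add: d_def)
    hence "C' * norm (y - a) < d1" using C' by (simp add: pos_less_divide_eq mult.commute)
    hence "norm (J (\<phi> y) - J (\<phi> a) - J' (\<phi> y - \<phi> a)) \<le> e / 2 / C' * norm (\<phi> y - \<phi> a)"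
      using lip' by (intro J_approx) simp
    also have "\<dots> \<le> e / 2 / C' * (C' * norm (y - a))"
      using lip' e C' by (intro mult_left_mono) simp_all
    also have "\<dots> = e / 2 * norm (y - a)" using C' by simp
    finally have "norm (J (\<phi> y) - J (\<phi> a) - J' (\<phi> y - \<phi> a)) \<le> e / 2 * norm (y - a)" .
    moreover have "norm (J' (\<phi> y) - J' (\<phi> a) - L (y - a)) \<le> e / 2 * norm (y - a)"
      using J'\<phi>_approx[OF that(1)] that(2) by (simp add: d_def)
    moreover have "J (\<phi> y) - J (\<phi> a) - L (y - a)
        = (J (\<phi> y) - J (\<phi> a) - J' (\<phi> y - \<phi> a)) + (J' (\<phi> y) - J' (\<phi> a) - L (y - a))"
      using linear_diff[OF lin] by simp
    ultimately show ?thesis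
      using norm_triangle_ineq[of "J (\<phi> y) - J (\<phi> a) - J' (\<phi> y - \<phi> a)"
          "J' (\<phi> y) - J' (\<phi> a) - L (y - a)"] by (simp only:)
  qed
  moreover have "d > 0" using r d1 d2 C' by (simp add: d_def)
  ultimately show "\<exists>d>0. \<forall>y\<in>S. norm (y - a) < d \<longrightarrow> norm (J (\<phi> y) - J (\<phi> a) - L (y - a)) \<le> e * norm (y - a)"
    by blast
qed

lemma has_derivative_componentwise_vec:
  fixes F :: "'a::real_normed_vector \<Rightarrow> ('b::euclidean_space)^'n"
  assumes "\<And>k. ((\<lambda>y. F y $ k) has_derivative (\<lambda>h. F' h $ k)) (at a within S)"
  shows "(F has_derivative F') (at a within S)"
proof -
  have "((\<lambda>y. F y \<bullet> j) has_derivative (\<lambda>h. F' h \<bullet> j)) (at a within S)" if j: "j \<in> Basis" for j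
  proof -
    obtain k u where j: "j = axis k u" and "u \<in> Basis" using j unfolding Basis_vec_def by blast
    show ?thesis unfolding j inner_axis by (rule has_derivative_inner_left[OF assms])
  qed
  thus ?thesis using has_derivative_componentwise_within by blast
qed

lemma has_derivative_norm_diff_power2:
  "((\<lambda>y. (norm (y - c))\<^sup>2) has_derivative (\<lambda>h. 2 * ((a - c) \<bullet> h))) (at a)"
proof -
  have "((\<lambda>y. (y - c) \<bullet> (y - c)) has_derivative (\<lambda>h. (a - c) \<bullet> h + h \<bullet> (a - c))) (at a)"
    by (auto intro!: derivative_eq_intros)
  thus ?thesis by (simp add: power2_norm_eq_inner inner_commute)
qed

lemma has_derivative_comp_norm_diff_power2:
  fixes a c :: "'a::real_inner"
  assumes f': "\<And>t. t > 0 \<Longrightarrow> (f has_real_derivative f' t) (at t)" and "a \<noteq> c"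
  shows "((\<lambda>y. f ((norm (y - c))\<^sup>2)) has_derivative
           (\<lambda>h. 2 * ((a - c) \<bullet> h) * f' ((norm (a - c))\<^sup>2))) (at a)"
proof -
  have "(f has_real_derivative f' ((norm (a - c))\<^sup>2)) (at ((norm (a - c))\<^sup>2))"
    using \<open>a \<noteq> c\<close> by (intro f') simp
  thus ?thesis by (rule DERIV_compose_FDERIV[OF _ has_derivative_norm_diff_power2])
qed

section \<open>Derivative of spectral functions\<close>

lemma symmetric_fun_gradient_eq:
  fixes J :: "real^('n::{finite,linorder}) \<Rightarrow> real"
  assumes J: "symmetric_fun J" and J': "(J has_derivative (\<lambda>h. gam \<bullet> h)) (at lam)"
    and eq: "lam $ a = lam $ b"
  shows "gam $ a = gam $ b"
proof -
  define \<tau> where "\<tau> = Transposition.transpose a b"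
  define T where "T v = (\<chi> i. v $ \<tau> i)" for v :: "real^('n::{finite,linorder})"
  have "\<tau> permutes UNIV" unfolding \<tau>_def by (rule permutes_swap_id[OF UNIV_I UNIV_I])
  hence JT: "J (T v) = J v" for v using J unfolding symmetric_fun_def T_def by blast
  have "linear T" unfolding T_def by (intro linearI) (simp_all add: vec_eq_iff)
  hence T: "bounded_linear T" by (simp add: linear_conv_bounded_linear)
  have "T lam = lam" using eq by (simp add: T_def \<tau>_def vec_eq_iff Transposition.transpose_def)
  hence "((\<lambda>v. J (T v)) has_derivative (\<lambda>h. gam \<bullet> T h)) (at lam)"
    using J' by (intro has_derivative_compose[OF bounded_linear_imp_has_derivative[OF T]]) simp
  hence "(J has_derivative (\<lambda>h. gam \<bullet> T h)) (at lam)" by (simp add: JT)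
  hence "(\<lambda>h. gam \<bullet> T h) = (\<lambda>h. gam \<bullet> h)" using J' has_derivative_unique by blast
  hence "gam \<bullet> T (axis a 1) = gam \<bullet> axis a 1" by (rule fun_cong)
  moreover have "T (axis a 1) = axis b 1"
    by (simp add: T_def \<tau>_def vec_eq_iff axis_def Transposition.transpose_def)
  ultimately show ?thesis by (simp add: inner_axis)
qed

text \<open>The sorted eigenvalue map is only Lipschitz at A, but gam \<bullet> \<lambda>(M) agrees with
  V \<bullet> M up to O(norm (M - A)^2).\<close>
theorem has_derivative_spectral_function:
  fixes A U :: "real^('n::{finite,linorder})^('n::{finite,linorder})"
    and J :: "real^('n::{finite,linorder}) \<Rightarrow> real"
  assumes U: "orthogonal_matrix U" and A: "transpose A = A"
    and A_eq: "A = U ** diag_mat (sorted_eigenvalues A) ** transpose U"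
    and J: "symmetric_fun J" and J': "(J has_derivative (\<lambda>h. gam \<bullet> h)) (at (sorted_eigenvalues A))"
  shows "((\<lambda>M. J (sorted_eigenvalues M)) has_derivative (\<lambda>H. (U ** diag_mat gam ** transpose U) \<bullet> H))
           (at A within {M. transpose M = M})"
proof -
  define lam where "lam = sorted_eigenvalues A"
  define V where "V = U ** diag_mat gam ** transpose U"
  define n where "n = real CARD('n)"
  have lam: "mono (vec_nth lam)" unfolding lam_def by (rule sorted_eigenvalues_mono[OF A])
  have gam: "gam $ a = gam $ b" if "lam $ a = lam $ b" for a b
    using symmetric_fun_gradient_eq[OF J J'] that unfolding lam_def .
  obtain g where g: "g > 0" and gap: "\<And>a b. lam $ a \<noteq> lam $ b \<Longrightarrow> g \<le> \<bar>lam $ a - lam $ b\<bar>"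
    using exists_separation_gap by blast
  define K where "K = (\<Sum>a\<in>UNIV. \<Sum>b\<in>UNIV. \<bar>gam $ b - gam $ a\<bar> * (\<bar>lam $ b\<bar> + g) * (4 / g\<^sup>2))"
  define r where "r = g / (2 * (n + 1))"
  have r: "r > 0" using g by (simp add: r_def n_def add_pos_nonneg)
  have small: "2 * (n + 1) * norm (M - A) < g" if "norm (M - A) < r" for M
    using that g by (simp add: r_def field_simps n_def)
  have A_lam: "A = U ** diag_mat lam ** transpose U" using A_eq by (simp add: lam_def)
  have deviation: "\<bar>gam \<bullet> sorted_eigenvalues M - V \<bullet> M\<bar> \<le> K * (norm (M - A))\<^sup>2"
    if "transpose M = M" "norm (M - A) < r" for M
    unfolding V_def K_def
    using inner_sorted_eigenvalues_deviation_le[OF U A_lam lam g gap gam that(1)] small[OF that(2)]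
    by (simp add: n_def)
  have "gam \<bullet> lam = V \<bullet> A" using deviation[OF A] r by (simp add: lam_def)
  hence "((\<lambda>M. gam \<bullet> sorted_eigenvalues M) has_derivative (\<lambda>H. V \<bullet> H)) (at A within {M. transpose M = M})"
    using deviation by (intro has_derivative_within_if_quadratic_remainder[OF bounded_linear_inner_right r])
      (simp add: lam_def inner_diff_right)
  moreover have "norm (sorted_eigenvalues M - sorted_eigenvalues A) \<le> n * norm (M - A)"
    if "M \<in> {M. transpose M = M}" "norm (M - A) < r" for M
  proof -
    have "norm (sorted_eigenvalues M - lam) \<le> (\<Sum>b\<in>UNIV. \<bar>(sorted_eigenvalues M - lam) $ b\<bar>)"
      by (rule norm_le_l1_cart)
    also have "\<dots> \<le> (\<Sum>b\<in>(UNIV::'n set). norm (M - A))"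
      using sorted_eigenvalues_perturbation_le[OF U A_lam lam g gap] that small
      by (intro sum_mono) (simp add: n_def)
    finally show ?thesis by (simp add: lam_def n_def)
  qed
  ultimately show ?thesis unfolding V_def
    by (intro has_derivative_compose_lipschitz[where \<phi>=sorted_eigenvalues and a=A, OF J' _ r]) auto
qed

section \<open>The gradient of the Laplacian spectrum\<close>

definition graph_laplacian :: "real^'n::finite^'n \<Rightarrow> real^'n^'n" where
  "graph_laplacian w = (\<chi> p q. (if p = q then (\<Sum>k\<in>UNIV. w $ p $ k) else 0) - w $ p $ q)"

lemma laplacian_eq_graph_laplacian: "laplacian f x = graph_laplacian (weight_mat f x)"
  by (simp add: laplacian_def degree_mat_def graph_laplacian_def vec_eq_iff)

lemma bounded_linear_graph_laplacian: "bounded_linear graph_laplacian"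
  by (intro linear_conv_bounded_linear[THEN iffD1] linearI)
    (simp_all add: graph_laplacian_def vec_eq_iff sum.distrib sum_distrib_left algebra_simps)

lemma inner_graph_laplacian:
  "V \<bullet> graph_laplacian w = (\<Sum>p\<in>UNIV. \<Sum>q\<in>UNIV. (V $ p $ p - V $ p $ q) * w $ p $ q)"
proof -
  have "V $ p $ q * graph_laplacian w $ p $ q
      = (if p = q then (\<Sum>k\<in>UNIV. V $ p $ p * w $ p $ k) else 0) - V $ p $ q * w $ p $ q" for p q
    by (simp add: graph_laplacian_def right_diff_distrib sum_distrib_left)
  thus ?thesis by (simp add: inner_matrix sum_subtractf left_diff_distrib)
qed

lemma symmetric_laplacian: "transpose (laplacian f x) = laplacian f x"
  by (simp add: vec_eq_iff transpose_def laplacian_def degree_mat_def weight_mat_def norm_minus_commute)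

definition edge_weight_deriv :: "(real \<Rightarrow> real) \<Rightarrow> ('n \<Rightarrow> real^'d) \<Rightarrow> 'n \<Rightarrow> 'n \<Rightarrow> real^'d \<Rightarrow> real" where
  "edge_weight_deriv f' x i k h = 2 * ((x i - x k) \<bullet> h) * f' ((norm (x i - x k))\<^sup>2)"

lemma edge_weight_deriv_self [simp]: "edge_weight_deriv f' x i i h = 0"
  by (simp add: edge_weight_deriv_def)

definition weight_mat_deriv :: "(real \<Rightarrow> real) \<Rightarrow> ('n::finite \<Rightarrow> real^'d) \<Rightarrow> 'n \<Rightarrow> real^'d \<Rightarrow> real^'n^'n" where
  "weight_mat_deriv f' x i h = (\<chi> p q. (if p = i then edge_weight_deriv f' x i q h else 0)
      + (if q = i then edge_weight_deriv f' x i p h else 0))"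

lemma has_derivative_weight_mat_update:
  fixes x :: "'n::finite \<Rightarrow> real^'d"
  assumes x: "inj x" and f': "\<And>t. t > 0 \<Longrightarrow> (f has_real_derivative f' t) (at t)"
  shows "((\<lambda>y. weight_mat f (x(i := y))) has_derivative weight_mat_deriv f' x i) (at (x i))"
proof (intro has_derivative_componentwise_vec)
  fix p q
  have edge: "((\<lambda>y. f ((norm (y - x k))\<^sup>2)) has_derivative edge_weight_deriv f' x i k) (at (x i))"
    if "k \<noteq> i" for k
    unfolding edge_weight_deriv_def using x that
    by (intro has_derivative_comp_norm_diff_power2[OF f']) (auto dest: injD)
  consider "p = q" | "p = i" "q \<noteq> i" | "q = i" "p \<noteq> i" | "p \<noteq> q" "p \<noteq> i" "q \<noteq> i" by blast
  thus "((\<lambda>y. weight_mat f (x(i := y)) $ p $ q) has_derivative (\<lambda>h. weight_mat_deriv f' x i h $ p $ q))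
      (at (x i))"
  proof cases
    case 1
    thus ?thesis by (cases "q = i") (simp_all add: weight_mat_def weight_mat_deriv_def)
  next
    case 2
    thus ?thesis using edge[of q] by (simp add: weight_mat_def weight_mat_deriv_def)
  next
    case 3
    thus ?thesis using edge[of p] by (simp add: weight_mat_def weight_mat_deriv_def norm_minus_commute)
  next
    case 4
    thus ?thesis by (simp add: weight_mat_def weight_mat_deriv_def)
  qed
qed

lemma has_derivative_laplacian_update:
  fixes x :: "'n::finite \<Rightarrow> real^'d"
  assumes "inj x" and "\<And>t. t > 0 \<Longrightarrow> (f has_real_derivative f' t) (at t)"
  shows "((\<lambda>y. laplacian f (x(i := y))) has_derivative (\<lambda>h. graph_laplacian (weight_mat_deriv f' x i h)))
    (at (x i))"
  unfolding laplacian_eq_graph_laplacian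
  by (rule bounded_linear.has_derivative[OF bounded_linear_graph_laplacian
        has_derivative_weight_mat_update[OF assms]])

lemma inner_graph_laplacian_weight_mat_deriv:
  assumes V: "\<And>p q. V $ p $ q = V $ q $ p"
  shows "V \<bullet> graph_laplacian (weight_mat_deriv f' x i h)
    = (\<Sum>k\<in>UNIV. (V $ k $ k - 2 * V $ i $ k + V $ i $ i) * edge_weight_deriv f' x i k h)"
proof -
  let ?e = "\<lambda>k. edge_weight_deriv f' x i k h"
  have "V \<bullet> graph_laplacian (weight_mat_deriv f' x i h)
      = (\<Sum>p\<in>UNIV. \<Sum>q\<in>UNIV. (if p = i then (V $ i $ i - V $ i $ q) * ?e q else 0)
          + (if q = i then (V $ p $ p - V $ p $ i) * ?e p else 0))"
    unfolding inner_graph_laplacian by (intro sum.cong refl) (simp add: weight_mat_deriv_def algebra_simps)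
  also have "\<dots> = (\<Sum>q\<in>UNIV. \<Sum>p\<in>UNIV. if p = i then (V $ i $ i - V $ i $ q) * ?e q else 0)
      + (\<Sum>p\<in>UNIV. \<Sum>q\<in>UNIV. if q = i then (V $ p $ p - V $ p $ i) * ?e p else 0)"
    by (subst sum.swap) (simp only: sum.distrib)
  also have "\<dots> = (\<Sum>k\<in>UNIV. (V $ i $ i - V $ i $ k) * ?e k + (V $ k $ k - V $ k $ i) * ?e k)"
    by (simp add: sum.distrib)
  also have "\<dots> = (\<Sum>k\<in>UNIV. (V $ k $ k - 2 * V $ i $ k + V $ i $ i) * ?e k)"
    using V by (intro sum.cong refl) (simp add: algebra_simps)
  finally show ?thesis .
qed

lemma sum_incidence_mult:
  fixes i k :: "'n::{finite,linorder}"
  assumes "k \<noteq> i"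
  shows "(\<Sum>l\<in>UNIV. incidence {i, k} l * U $ l $ j)\<^sup>2 = (U $ i $ j - U $ k $ j)\<^sup>2"
proof -
  have "Max {i, k} \<noteq> Min {i, k}" "{Max {i, k}, Min {i, k}} = {i, k}"
    using assms by (auto simp: max_def min_def)
  moreover have "(\<Sum>l\<in>UNIV. incidence {i, k} l * U $ l $ j) = U $ Max {i, k} $ j - U $ Min {i, k} $ j"
    using calculation(1) by (simp add: incidence_def if_distrib[of "\<lambda>x. x * _"] sum.delta
        cong: if_cong) (simp add: sum.If_cases)
  ultimately show ?thesis by (auto simp: doubleton_eq_iff power2_commute)
qed

lemma incidence_edge_weight_eq:
  fixes i k :: "'n::{finite,linorder}"
  assumes "k \<noteq> i"
  shows "(\<Sum>j\<in>UNIV. (\<Sum>l\<in>UNIV. incidence {i, k} l * U $ l $ j)\<^sup>2 * g $ j)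
    = (let V = U ** diag_mat g ** transpose U in V $ k $ k - 2 * V $ i $ k + V $ i $ i)"
proof -
  have "(U $ i $ j - U $ k $ j)\<^sup>2 * g $ j
      = U $ k $ j * g $ j * U $ k $ j - 2 * (U $ i $ j * g $ j * U $ k $ j) + U $ i $ j * g $ j * U $ i $ j" for j
    by (simp add: power2_eq_square algebra_simps)
  thus ?thesis
    using assms by (simp add: sum_incidence_mult orthogonal_congruence_diag_nth Let_def sum.distrib
        sum_subtractf sum_distrib_left)
qed

theorem propositionA2:
  fixes x :: "'n::{finite,linorder} \<Rightarrow> real^'d"
    and i :: "'n::{finite,linorder}"
    and f f' :: "real \<Rightarrow> real"
    and J :: "real^('n::{finite,linorder}) \<Rightarrow> real"
    and gradJ :: "real^('n::{finite,linorder})"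
    and U :: "real^('n::{finite,linorder})^('n::{finite,linorder})"
  assumes distinct: "inj x"
    and f_deriv: "\<And>t. t > 0 \<Longrightarrow> (f has_real_derivative f' t) (at t)"
    and J_sym: "symmetric_fun J"
    and J_grad: "(J has_derivative (\<lambda>h. gradJ \<bullet> h)) (at (sorted_eigenvalues (laplacian f x)))"
    and U_orth: "orthogonal_matrix U"
    and U_diag: "laplacian f x = U ** diag_mat (sorted_eigenvalues (laplacian f x)) ** transpose U"
  shows "((\<lambda>y. J (sorted_eigenvalues (laplacian f (x(i := y))))) has_derivative
            (\<lambda>h. (2 *\<^sub>R (\<Sum>k\<in>UNIV - {i}.
               (let V = U ** diag_mat gradJ ** transpose U in
                  (V $ k $ k - 2 * V $ i $ k + V $ i $ i) * f' ((norm (x i - x k))\<^sup>2))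
                 *\<^sub>R (x i - x k))) \<bullet> h)) (at (x i))
      \<and> ((\<lambda>y. J (sorted_eigenvalues (laplacian f (x(i := y))))) has_derivative
            (\<lambda>h. (2 *\<^sub>R (\<Sum>k\<in>UNIV - {i}.
               (let g = (\<lambda>e. \<Sum>j\<in>UNIV. (\<Sum>l\<in>UNIV. incidence e l * U $ l $ j)\<^sup>2 * gradJ $ j) in
                  g {i, k} * f' ((norm (x i - x k))\<^sup>2))
                 *\<^sub>R (x i - x k))) \<bullet> h)) (at (x i))"
proof -
  define V where "V = U ** diag_mat gradJ ** transpose U"
  have V_sym: "V $ p $ q = V $ q $ p" for p q
    by (simp add: V_def orthogonal_congruence_diag_nth ac_simps)
  have "((\<lambda>M. J (sorted_eigenvalues M)) has_derivative (\<bullet>) V)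
      (at (laplacian f (x(i := x i))) within range (\<lambda>y. laplacian f (x(i := y))))"
    using has_derivative_spectral_function[OF U_orth symmetric_laplacian U_diag J_sym J_grad]
    by (auto simp: V_def symmetric_laplacian intro: has_derivative_subset)
  hence deriv: "((\<lambda>y. J (sorted_eigenvalues (laplacian f (x(i := y))))) has_derivative
      (\<lambda>h. V \<bullet> graph_laplacian (weight_mat_deriv f' x i h))) (at (x i))"
    using has_derivative_in_compose[OF has_derivative_laplacian_update[OF distinct f_deriv]] by simp
  define S where "S = (\<Sum>k\<in>UNIV - {i}.
      ((V $ k $ k - 2 * V $ i $ k + V $ i $ i) * f' ((norm (x i - x k))\<^sup>2)) *\<^sub>R (x i - x k))"
  have grad: "V \<bullet> graph_laplacian (weight_mat_deriv f' x i h) = (2 *\<^sub>R S) \<bullet> h" for h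
    unfolding inner_graph_laplacian_weight_mat_deriv[OF V_sym] S_def
    by (subst sum.mono_neutral_right[of UNIV "UNIV - {i}"])
      (auto simp: inner_sum_left sum_distrib_left edge_weight_deriv_def algebra_simps)
  have "(\<Sum>k\<in>UNIV - {i}. (let V = U ** diag_mat gradJ ** transpose U in
      (V $ k $ k - 2 * V $ i $ k + V $ i $ i) * f' ((norm (x i - x k))\<^sup>2)) *\<^sub>R (x i - x k)) = S"
    by (simp add: S_def V_def Let_def)
  moreover have "(\<Sum>k\<in>UNIV - {i}.
      (let g = (\<lambda>e. \<Sum>j\<in>UNIV. (\<Sum>l\<in>UNIV. incidence e l * U $ l $ j)\<^sup>2 * gradJ $ j) in
         g {i, k} * f' ((norm (x i - x k))\<^sup>2)) *\<^sub>R (x i - x k)) = S"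
    unfolding S_def by (rule sum.cong) (simp_all add: incidence_edge_weight_eq V_def Let_def)
  ultimately show ?thesis using deriv unfolding grad by simp
qed

end
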